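(* Let $N$ be a positive even integer, $M_t,M_r$ positive integers, and $\theta\in\mathbb R$. Let $\hat{\mathbf G}_t\in\mathbb C^{N\times M_t}$ have i.i.d. circularly symmetric complex Gaussian entries of zero mean and unit variance. Let $\gamma_4^\star=\max_{\mathbf\Phi}\left(\|\hat{\mathbf G}_t^T\mathbf\Phi^T\mathbf a(\theta)\|^2\|\mathbf D_2\mathbf b(\theta)\|^2+\|\mathbf b(\theta)\|^2\|\hat{\mathbf G}_t^T\mathbf\Phi^T\mathbf D_1\mathbf a(\theta)\|^2\right)$, the maximum over all $\mathbf\Phi=\mathrm{diag}(e^{j\phi_1},\dots,e^{j\phi_N})$, $\phi_n\in\mathbb R$. Then $\frac{\pi M_rN^4}{16}+\frac{M_r(M_t-1)N^2}{2}\le\mathbb E[\gamma_4^\star]\le\frac{M_tM_r(M_r^2-1)N^2}{3}+\frac{M_tM_rN^2(N^2-1)}{3}.$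
   Context: $j=\sqrt{-1}$. Fix $\hat d>0$, $\lambda>0$. $\mathbf a(\theta)\in\mathbb C^N$ has $n$-th entry $e^{j\pi(2n-N-1)\hat d\sin\theta/\lambda}$; $\mathbf b(\theta)\in\mathbb C^{M_r}$ has $m$-th entry $e^{j\pi(2m-M_r-1)\hat d\sin\theta/\lambda}$; $\mathbf D_1=\mathrm{diag}(1-N,3-N,\dots,N-1)$ and $\mathbf D_2=\mathrm{diag}(1-M_r,3-M_r,\dots,M_r-1)$. *)

theory Defs
  imports "HOL-Probability.Probability"
begin

text \<open>Standard circularly symmetric complex Gaussian CN(0,1): real and imaginary
parts independent N(0,1/2).\<close>
definition cgauss :: "complex measure" where
  "cgauss = distr
     (density lborel (normal_density 0 (sqrt (1/2))) \<Otimes>\<^sub>M density lborel (normal_density 0 (sqrt (1/2))))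
     borel (\<lambda>(x, y). Complex x y)"

definition Gt_measure :: "nat \<Rightarrow> nat \<Rightarrow> (nat \<times> nat \<Rightarrow> complex) measure" where
  "Gt_measure N Mt = PiM ({1..N} \<times> {1..Mt}) (\<lambda>_. cgauss)"

definition avec :: "real \<Rightarrow> real \<Rightarrow> nat \<Rightarrow> real \<Rightarrow> nat \<Rightarrow> complex" where
  "avec dh lam N \<theta> n =
     exp (\<i> * complex_of_real (pi * (2 * real n - real N - 1) * dh * sin \<theta> / lam))"

definition bvec :: "real \<Rightarrow> real \<Rightarrow> nat \<Rightarrow> real \<Rightarrow> nat \<Rightarrow> complex" where
  "bvec dh lam Mr \<theta> m =
     exp (\<i> * complex_of_real (pi * (2 * real m - real Mr - 1) * dh * sin \<theta> / lam))"

text \<open>Diagonal entries of D1 = diag(1-N,...,N-1), D2 = diag(1-Mr,...,Mr-1).\<close>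
definition dentry :: "nat \<Rightarrow> nat \<Rightarrow> real" where
  "dentry K n = 2 * real n - real K - 1"

text \<open>The objective for a given Phi = diag(exp(j phi_1),...,exp(j phi_N)).
  (G^T Phi^T a)_k = sum_n G(n,k) e^{j phi_n} a_n.\<close>
definition obj4 :: "real \<Rightarrow> real \<Rightarrow> nat \<Rightarrow> nat \<Rightarrow> nat \<Rightarrow> real \<Rightarrow>
    (nat \<times> nat \<Rightarrow> complex) \<Rightarrow> (nat \<Rightarrow> real) \<Rightarrow> real" where
  "obj4 dh lam N Mt Mr \<theta> G \<phi> =
     (\<Sum>k=1..Mt. (cmod (\<Sum>n=1..N. G (n, k) * exp (\<i> * complex_of_real (\<phi> n)) * avec dh lam N \<theta> n))\<^sup>2)
       * (\<Sum>m=1..Mr. (cmod (complex_of_real (dentry Mr m) * bvec dh lam Mr \<theta> m))\<^sup>2)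
   + (\<Sum>m=1..Mr. (cmod (bvec dh lam Mr \<theta> m))\<^sup>2)
       * (\<Sum>k=1..Mt. (cmod (\<Sum>n=1..N. G (n, k) * exp (\<i> * complex_of_real (\<phi> n))
                              * complex_of_real (dentry N n) * avec dh lam N \<theta> n))\<^sup>2)"

text \<open>gamma_4^* : the maximum over all phase vectors (attained, since the objective is
continuous and periodic in each phase; expressed as a supremum).\<close>
definition gamma4 :: "real \<Rightarrow> real \<Rightarrow> nat \<Rightarrow> nat \<Rightarrow> nat \<Rightarrow> real \<Rightarrow>
    (nat \<times> nat \<Rightarrow> complex) \<Rightarrow> real" where
  "gamma4 dh lam N Mt Mr \<theta> G = (SUP \<phi>\<in>UNIV. obj4 dh lam N Mt Mr \<theta> G \<phi>)"

end

theory Submission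
  imports Defs
begin

text \<open>
  Upper bound: for every choice of phases, Cauchy-Schwarz bounds each column term of the
  objective by \<open>\<parallel>\<Phi>\<^sup>T a\<parallel>\<^sup>2\<close> resp. \<open>\<parallel>\<Phi>\<^sup>T D\<^sub>1 a\<parallel>\<^sup>2\<close> times the squared norm of the corresponding
  column of \<open>G\<close>, so \<open>\<gamma>\<^sub>4\<^sup>* \<le> (\<parallel>a\<parallel>\<^sup>2 \<parallel>D\<^sub>2 b\<parallel>\<^sup>2 + \<parallel>b\<parallel>\<^sup>2 \<parallel>D\<^sub>1 a\<parallel>\<^sup>2) \<parallel>G\<parallel>\<^sub>F\<^sup>2\<close>, and \<open>E \<parallel>G\<parallel>\<^sub>F\<^sup>2 = N M\<^sub>t\<close>.

  Lower bound: drop the first term of the objective and choose the phases so that \<open>\<Phi> D\<^sub>1 a(\<theta>)\<close>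
  cancels the phases of the first column of \<open>G\<close>. That column then contributes
  \<open>(\<Sum>\<^sub>n \<bar>d\<^sub>n\<bar> \<bar>g\<^sub>n\<^sub>1\<bar>)\<^sup>2\<close>, whose mean is at least \<open>(E \<Sum>\<^sub>n \<bar>d\<^sub>n\<bar> \<bar>g\<^sub>n\<^sub>1\<bar>)\<^sup>2 = (\<surd>\<pi>/2 \<cdot> N\<^sup>2/2)\<^sup>2\<close>,
  since \<open>E \<bar>g\<bar> = \<surd>\<pi>/2\<close> and \<open>\<Sum>\<^sub>n \<bar>d\<^sub>n\<bar> = N\<^sup>2/2\<close> for even \<open>N\<close>. The phases only depend on the first
  column, so for \<open>k \<ge> 2\<close> the sign symmetry of \<open>g\<^sub>n\<^sub>k\<close> kills the cross terms and
  \<open>E \<bar>\<Sum>\<^sub>n g\<^sub>n\<^sub>k w\<^sub>n\<bar>\<^sup>2 = \<Sum>\<^sub>n d\<^sub>n\<^sup>2 = N(N\<^sup>2-1)/3 \<ge> N\<^sup>2/2\<close>. Everything is multiplied by \<open>\<parallel>b\<parallel>\<^sup>2 = M\<^sub>r\<close>.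
\<close>

section \<open>A Gaussian integral over the plane\<close>

lemma nn_integral_even_real:
  fixes g :: "real \<Rightarrow> ennreal"
  assumes [measurable]: "g \<in> borel_measurable borel" and even: "\<And>x. g (- x) = g x"
  shows "(\<integral>\<^sup>+x. g x \<partial>lborel) = 2 * (\<integral>\<^sup>+x. g x * indicator {0..} x \<partial>lborel)"
proof -
  have "(\<integral>\<^sup>+x. g x \<partial>lborel) = (\<integral>\<^sup>+x. g x * indicator {0..} x + g x * indicator {..<0} x \<partial>lborel)"
    by (intro nn_integral_cong) (auto split: split_indicator)
  also have "\<dots> = (\<integral>\<^sup>+x. g x * indicator {0..} x \<partial>lborel) + (\<integral>\<^sup>+x. g x * indicator {..<0} x \<partial>lborel)"
    by (rule nn_integral_add) auto
  also have "(\<integral>\<^sup>+x. g x * indicator {..<0} x \<partial>lborel)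
      = (\<integral>\<^sup>+x. g (- x) * indicator {..<0} (- x) \<partial>lborel)"
    using nn_integral_real_affine[of "\<lambda>x. g x * indicator {..<0} x" "-1" 0] by simp
  also have "\<dots> = (\<integral>\<^sup>+x. g x * indicator {0..} x \<partial>lborel)"
    by (intro nn_integral_cong_AE AE_I[where N="{0}"]) (auto simp: even split: split_indicator)
  finally show ?thesis
    by (simp add: mult_2)
qed

lemma nn_integral_sq_exp_neg_sq:
  "(\<integral>\<^sup>+t. ennreal (t\<^sup>2 * exp (- t\<^sup>2)) * indicator {0..} t \<partial>lborel) = ennreal (sqrt pi / 4)"
proof -
  have "has_bochner_integral lborel (\<lambda>t. indicator {0..} t *\<^sub>R (exp (- t\<^sup>2) * t ^ (2 * 1)))
      (sqrt pi / 2 * (fact (2 * 1) / (2 ^ (2 * 1) * fact 1)))"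
    by (rule gaussian_moment_even_pos)
  then have "has_bochner_integral lborel (\<lambda>t. indicator {0..} t * (t\<^sup>2 * exp (- t\<^sup>2))) (sqrt pi / 4)"
    by (simp add: numeral_2_eq_2 mult.commute)
  then have "(\<integral>\<^sup>+t. ennreal (indicator {0..} t * (t\<^sup>2 * exp (- t\<^sup>2))) \<partial>lborel) = ennreal (sqrt pi / 4)"
    by (subst nn_integral_eq_integrable) (auto simp: has_bochner_integral_iff)
  then show ?thesis
    by (simp add: indicator_mult_ennreal mult.commute)
qed

lemma nn_integral_sq_exp_neg_scaled:
  assumes "a > 0"
  shows "(\<integral>\<^sup>+x. ennreal (x\<^sup>2 * sqrt a * exp (- (x\<^sup>2 * a))) * indicator {0<..} x \<partial>lborel)
    = ennreal (sqrt pi / 4 / a)"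
proof -
  define c where "c = 1 / sqrt a"
  have c: "c > 0" "c\<^sup>2 * a = 1" "c * sqrt a = 1"
    using assms by (simp_all add: c_def power_divide)
  have integrand: "ennreal ((c * t)\<^sup>2 * sqrt a * exp (- ((c * t)\<^sup>2 * a))) * indicator {0<..} (c * t)
      = ennreal c * (ennreal (t\<^sup>2 * exp (- t\<^sup>2)) * indicator {0..} t)" for t
  proof -
    have "(c * t)\<^sup>2 * a = t\<^sup>2" "(c * t)\<^sup>2 * sqrt a = c * t\<^sup>2"
      using c by (simp_all add: power_mult_distrib power2_eq_square mult_ac)
    then have "(c * t)\<^sup>2 * sqrt a * exp (- ((c * t)\<^sup>2 * a)) = c * (t\<^sup>2 * exp (- t\<^sup>2))"
      by simp
    then show ?thesis
      using c by (auto simp: ennreal_mult' indicator_def zero_less_mult_iff)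
  qed
  have "(\<integral>\<^sup>+x. ennreal (x\<^sup>2 * sqrt a * exp (- (x\<^sup>2 * a))) * indicator {0<..} x \<partial>lborel)
      = ennreal c * (\<integral>\<^sup>+t. ennreal ((c * t)\<^sup>2 * sqrt a * exp (- ((c * t)\<^sup>2 * a))) * indicator {0<..} (c * t) \<partial>lborel)"
    using nn_integral_real_affine[of "\<lambda>x. ennreal (x\<^sup>2 * sqrt a * exp (- (x\<^sup>2 * a))) * indicator {0<..} x" c 0] c
    by simp
  also have "\<dots> = ennreal c * (ennreal c * ennreal (sqrt pi / 4))"
    by (simp add: integrand nn_integral_cmult nn_integral_sq_exp_neg_sq)
  also have "\<dots> = ennreal (sqrt pi / 4 / a)"
    using assms c by (simp add: ennreal_mult[symmetric] c_def)
  finally show ?thesis .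
qed

lemma nn_integral_inverse_one_plus_sq:
  assumes "c \<ge> 0"
  shows "(\<integral>\<^sup>+s. ennreal (c / (1 + s\<^sup>2)) * indicator {0..} s \<partial>lborel) = ennreal (c * pi / 2)"
proof -
  have "(\<integral>\<^sup>+s. ennreal (c / (1 + s\<^sup>2)) * indicator {0..} s \<partial>lborel) = ennreal (c * (pi / 2) - c * arctan 0)"
  proof (rule nn_integral_FTC_atLeast)
    show "((\<lambda>s. c * arctan s) \<longlongrightarrow> c * (pi / 2)) at_top"
      by (intro tendsto_intros tendsto_arctan_at_top)
  qed (use assms in \<open>auto intro!: derivative_eq_intros simp: add_nonneg_eq_0_iff field_simps power2_eq_square\<close>)
  then show ?thesis by simp
qed

lemma nn_integral_gaussian_norm_radial_substitution:
  fixes x :: real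
  assumes "x > 0"
  shows "(\<integral>\<^sup>+y. ennreal (exp (- (x\<^sup>2 + y\<^sup>2)) * sqrt (x\<^sup>2 + y\<^sup>2)) * indicator {0..} y \<partial>lborel)
    = (\<integral>\<^sup>+s. ennreal (x\<^sup>2 * sqrt (1 + s\<^sup>2) * exp (- (x\<^sup>2 * (1 + s\<^sup>2)))) * indicator {0..} s \<partial>lborel)"
proof -
  have integrand: "ennreal x * (ennreal (exp (- (x\<^sup>2 + (x * s)\<^sup>2)) * sqrt (x\<^sup>2 + (x * s)\<^sup>2)) * indicator {0..} (x * s))
      = ennreal (x\<^sup>2 * sqrt (1 + s\<^sup>2) * exp (- (x\<^sup>2 * (1 + s\<^sup>2)))) * indicator {0..} s" for s
  proof -
    have "x\<^sup>2 + (x * s)\<^sup>2 = x\<^sup>2 * (1 + s\<^sup>2)"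
      by (simp add: algebra_simps power_mult_distrib)
    then have "x * (exp (- (x\<^sup>2 + (x * s)\<^sup>2)) * sqrt (x\<^sup>2 + (x * s)\<^sup>2))
        = x\<^sup>2 * sqrt (1 + s\<^sup>2) * exp (- (x\<^sup>2 * (1 + s\<^sup>2)))"
      using assms by (simp add: real_sqrt_mult power2_eq_square)
    then show ?thesis
      using assms by (simp add: ennreal_mult'[symmetric] mult.assoc indicator_def zero_le_mult_iff)
  qed
  have "(\<integral>\<^sup>+y. ennreal (exp (- (x\<^sup>2 + y\<^sup>2)) * sqrt (x\<^sup>2 + y\<^sup>2)) * indicator {0..} y \<partial>lborel)
      = ennreal x * (\<integral>\<^sup>+s. ennreal (exp (- (x\<^sup>2 + (x * s)\<^sup>2)) * sqrt (x\<^sup>2 + (x * s)\<^sup>2)) * indicator {0..} (x * s) \<partial>lborel)"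
    using nn_integral_real_affine[of "\<lambda>y. ennreal (exp (- (x\<^sup>2 + y\<^sup>2)) * sqrt (x\<^sup>2 + y\<^sup>2)) * indicator {0..} y" x 0] assms
    by simp
  also have "\<dots> = (\<integral>\<^sup>+s. ennreal x * (ennreal (exp (- (x\<^sup>2 + (x * s)\<^sup>2)) * sqrt (x\<^sup>2 + (x * s)\<^sup>2))
      * indicator {0..} (x * s)) \<partial>lborel)"
    by (rule nn_integral_cmult[symmetric]) auto
  also have "\<dots> = (\<integral>\<^sup>+s. ennreal (x\<^sup>2 * sqrt (1 + s\<^sup>2) * exp (- (x\<^sup>2 * (1 + s\<^sup>2)))) * indicator {0..} s \<partial>lborel)"
    by (simp only: integrand)
  finally show ?thesis .
qed

text \<open>After the substitution \<open>y = x s\<close> the integral over \<open>x\<close> is elementary, and Fubini leaves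
  \<open>\<integral>\<^sub>0\<^sup>\<infinity> \<surd>\<pi> / (4 (1 + s\<^sup>2)) ds\<close>.\<close>
lemma nn_integral_gaussian_norm_quadrant:
  "(\<integral>\<^sup>+x. (\<integral>\<^sup>+y. ennreal (exp (- (x\<^sup>2 + y\<^sup>2)) * sqrt (x\<^sup>2 + y\<^sup>2)) * indicator {0..} y \<partial>lborel)
      * indicator {0..} x \<partial>lborel) = ennreal (pi * sqrt pi / 8)"
proof -
  let ?H = "\<lambda>x s. ennreal (x\<^sup>2 * sqrt (1 + s\<^sup>2) * exp (- (x\<^sup>2 * (1 + s\<^sup>2))))"
  have "(\<integral>\<^sup>+x. (\<integral>\<^sup>+y. ennreal (exp (- (x\<^sup>2 + y\<^sup>2)) * sqrt (x\<^sup>2 + y\<^sup>2)) * indicator {0..} y \<partial>lborel)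
      * indicator {0..} x \<partial>lborel)
    = (\<integral>\<^sup>+x. (\<integral>\<^sup>+y. ennreal (exp (- (x\<^sup>2 + y\<^sup>2)) * sqrt (x\<^sup>2 + y\<^sup>2)) * indicator {0..} y \<partial>lborel)
      * indicator {0<..} x \<partial>lborel)"
    by (intro nn_integral_cong_AE AE_I[where N="{0}"]) (auto split: split_indicator)
  also have "\<dots> = (\<integral>\<^sup>+x. (\<integral>\<^sup>+s. ?H x s * indicator {0..} s \<partial>lborel) * indicator {0<..} x \<partial>lborel)"
  proof (intro nn_integral_cong)
    fix x :: real
    show "(\<integral>\<^sup>+y. ennreal (exp (- (x\<^sup>2 + y\<^sup>2)) * sqrt (x\<^sup>2 + y\<^sup>2)) * indicator {0..} y \<partial>lborel)
        * indicator {0<..} x = (\<integral>\<^sup>+s. ?H x s * indicator {0..} s \<partial>lborel) * indicator {0<..} x"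
      by (cases "x > 0") (simp_all only: nn_integral_gaussian_norm_radial_substitution, simp)
  qed
  also have "\<dots> = (\<integral>\<^sup>+x. \<integral>\<^sup>+s. ?H x s * indicator {0..} s * indicator {0<..} x \<partial>lborel \<partial>lborel)"
    by (intro nn_integral_cong) (simp add: nn_integral_multc)
  also have "\<dots> = (\<integral>\<^sup>+s. \<integral>\<^sup>+x. ?H x s * indicator {0..} s * indicator {0<..} x \<partial>lborel \<partial>lborel)"
    by (rule lborel_pair.Fubini'[symmetric]) auto
  also have "\<dots> = (\<integral>\<^sup>+s. (\<integral>\<^sup>+x. ?H x s * indicator {0<..} x \<partial>lborel) * indicator {0..} s \<partial>lborel)"
    by (intro nn_integral_cong, subst nn_integral_multc[symmetric]) (auto intro!: nn_integral_cong simp: mult_ac)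
  also have "\<dots> = (\<integral>\<^sup>+s. ennreal (sqrt pi / 4 / (1 + s\<^sup>2)) * indicator {0..} s \<partial>lborel)"
    by (simp add: nn_integral_sq_exp_neg_scaled add_pos_nonneg)
  also have "\<dots> = ennreal (pi * sqrt pi / 8)"
    by (subst nn_integral_inverse_one_plus_sq) simp_all
  finally show ?thesis .
qed

lemma nn_integral_gaussian_norm_plane:
  "(\<integral>\<^sup>+x. \<integral>\<^sup>+y. ennreal (exp (- (x\<^sup>2 + y\<^sup>2)) * sqrt (x\<^sup>2 + y\<^sup>2)) \<partial>lborel \<partial>lborel)
    = ennreal (pi * sqrt pi / 2)"
proof -
  let ?F = "\<lambda>x y. ennreal (exp (- (x\<^sup>2 + y\<^sup>2)) * sqrt (x\<^sup>2 + y\<^sup>2))"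
  have "(\<integral>\<^sup>+x. \<integral>\<^sup>+y. ?F x y \<partial>lborel \<partial>lborel)
      = (\<integral>\<^sup>+x. 2 * (\<integral>\<^sup>+y. ?F x y * indicator {0..} y \<partial>lborel) \<partial>lborel)"
    by (intro nn_integral_cong nn_integral_even_real) auto
  also have "\<dots> = 2 * (\<integral>\<^sup>+x. 2 * (\<integral>\<^sup>+y. ?F x y * indicator {0..} y \<partial>lborel) * indicator {0..} x \<partial>lborel)"
    by (rule nn_integral_even_real) auto
  also have "\<dots> = 4 * ennreal (pi * sqrt pi / 8)"
    by (simp add: nn_integral_cmult mult.assoc nn_integral_gaussian_norm_quadrant[symmetric])
  also have "\<dots> = ennreal (pi * sqrt pi / 2)"
    using ennreal_mult[of 4 "pi * sqrt pi / 8"] by simp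
  finally show ?thesis .
qed

section \<open>The standard complex Gaussian\<close>

abbreviation half_var_normal :: "real measure" where
  "half_var_normal \<equiv> density lborel (\<lambda>x. ennreal (normal_density 0 (sqrt (1/2)) x))"

lemma normal_density_half_var: "normal_density 0 (sqrt (1/2)) x = exp (- x\<^sup>2) / sqrt pi"
  by (simp add: normal_density_def power_divide)

lemma prob_space_half_var_normal: "prob_space half_var_normal"
  by (rule prob_space_normal_density) simp

lemma measurable_half_var_normal_pair_iff:
  "measurable (half_var_normal \<Otimes>\<^sub>M half_var_normal) N = measurable (borel \<Otimes>\<^sub>M borel) N"
  by (rule measurable_cong_sets[OF sets_pair_measure_cong]) simp_all

lemma borel_measurable_Complex_pair [measurable]:
  "(\<lambda>(x, y). Complex x y) \<in> borel_measurable (borel \<Otimes>\<^sub>M borel)"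
  by (simp add: Complex_eq[abs_def] case_prod_beta')

lemma prob_space_cgauss: "prob_space cgauss"
proof -
  interpret prob_space half_var_normal by (rule prob_space_half_var_normal)
  interpret pair_prob_space half_var_normal half_var_normal ..
  show ?thesis
    unfolding cgauss_def by (rule prob_space_distr) (simp add: measurable_half_var_normal_pair_iff)
qed

lemma sets_cgauss [measurable_cong, simp]: "sets cgauss = sets borel"
  by (simp add: cgauss_def)

lemma space_cgauss [simp]: "space cgauss = UNIV"
  by (simp add: cgauss_def)

lemma measurable_cgauss_iff: "measurable M cgauss = borel_measurable M"
  by (rule measurable_cong_sets) auto

lemma nn_integral_cgauss:
  assumes [measurable]: "f \<in> borel_measurable borel"
  shows "(\<integral>\<^sup>+z. f z \<partial>cgauss) = (\<integral>\<^sup>+x. \<integral>\<^sup>+y. f (Complex x y) \<partial>half_var_normal \<partial>half_var_normal)"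
proof -
  interpret prob_space half_var_normal by (rule prob_space_half_var_normal)
  have "(\<integral>\<^sup>+z. f z \<partial>cgauss) = (\<integral>\<^sup>+p. f (case p of (x, y) \<Rightarrow> Complex x y) \<partial>(half_var_normal \<Otimes>\<^sub>M half_var_normal))"
    unfolding cgauss_def by (rule nn_integral_distr) (simp_all add: measurable_half_var_normal_pair_iff)
  also have "\<dots> = (\<integral>\<^sup>+x. \<integral>\<^sup>+y. f (Complex x y) \<partial>half_var_normal \<partial>half_var_normal)"
    by (subst nn_integral_fst[symmetric]) (simp_all add: measurable_half_var_normal_pair_iff)
  finally show ?thesis .
qed

lemma nn_integral_half_var_normal_sq: "(\<integral>\<^sup>+x. ennreal (x\<^sup>2) \<partial>half_var_normal) = ennreal (1/2)"
proof -
  have "has_bochner_integral lborel (\<lambda>x. normal_density 0 (sqrt (1/2)) x * (x - 0) ^ (2 * 1))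
      (fact (2 * 1) / ((2 / (sqrt (1/2))\<^sup>2) ^ 1 * fact 1))"
    by (rule normal_moment_even) simp
  then have "has_bochner_integral lborel (\<lambda>x. normal_density 0 (sqrt (1/2)) x * x\<^sup>2) (1/2)"
    by (simp add: numeral_2_eq_2)
  then have "(\<integral>\<^sup>+x. ennreal (normal_density 0 (sqrt (1/2)) x * x\<^sup>2) \<partial>lborel) = ennreal (1/2)"
    by (subst nn_integral_eq_integrable) (auto simp: has_bochner_integral_iff)
  then show ?thesis
    by (simp add: nn_integral_density ennreal_mult')
qed

lemma has_bochner_integral_cgauss_norm_sq: "has_bochner_integral cgauss (\<lambda>z. (cmod z)\<^sup>2) 1"
proof -
  interpret prob_space half_var_normal by (rule prob_space_half_var_normal)
  have space_1: "emeasure half_var_normal UNIV = 1"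
    using emeasure_space_1 by simp
  have "(\<integral>\<^sup>+z. ennreal ((cmod z)\<^sup>2) \<partial>cgauss)
      = (\<integral>\<^sup>+x. \<integral>\<^sup>+y. ennreal (x\<^sup>2) + ennreal (y\<^sup>2) \<partial>half_var_normal \<partial>half_var_normal)"
    by (simp add: nn_integral_cgauss complex_norm ennreal_plus)
  also have "\<dots> = ennreal (1/2) + ennreal (1/2)"
    by (simp add: nn_integral_add nn_integral_half_var_normal_sq space_1)
  also have "\<dots> = ennreal 1"
    by (subst ennreal_plus[symmetric]) auto
  finally show ?thesis
    by (intro has_bochner_integral_nn_integral) auto
qed

lemma has_bochner_integral_cgauss_norm: "has_bochner_integral cgauss cmod (sqrt pi / 2)"
proof -
  have sqrt_pi: "sqrt pi * (sqrt pi * c) = pi * c" for c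
    by (simp flip: mult.assoc)
  have "(\<integral>\<^sup>+z. ennreal (cmod z) \<partial>cgauss)
      = (\<integral>\<^sup>+x. \<integral>\<^sup>+y. ennreal (exp (- (x\<^sup>2 + y\<^sup>2)) * sqrt (x\<^sup>2 + y\<^sup>2)) * ennreal (1 / pi) \<partial>lborel \<partial>lborel)"
    by (simp add: nn_integral_cgauss nn_integral_density complex_norm normal_density_half_var
        nn_integral_cmult[symmetric] ennreal_mult'[symmetric] exp_diff exp_minus field_simps sqrt_pi
        cong: nn_integral_cong)
  also have "\<dots> = (\<integral>\<^sup>+x. \<integral>\<^sup>+y. ennreal (exp (- (x\<^sup>2 + y\<^sup>2)) * sqrt (x\<^sup>2 + y\<^sup>2)) \<partial>lborel \<partial>lborel) * ennreal (1 / pi)"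
    by (subst nn_integral_multc[symmetric]) (auto intro!: nn_integral_cong nn_integral_multc)
  also have "\<dots> = ennreal (pi * sqrt pi / 2) * ennreal (1 / pi)"
    by (simp only: nn_integral_gaussian_norm_plane)
  also have "\<dots> = ennreal (sqrt pi / 2)"
    by (simp add: ennreal_mult[symmetric])
  finally show ?thesis
    by (intro has_bochner_integral_nn_integral) auto
qed

lemma distr_uminus_half_var_normal: "distr half_var_normal borel uminus = half_var_normal"
proof -
  have "density (distr lborel borel uminus) (\<lambda>x. ennreal (normal_density 0 (sqrt (1/2)) x))
      = distr (density lborel (\<lambda>x. ennreal (normal_density 0 (sqrt (1/2)) (- x)))) borel uminus"
    by (rule density_distr) auto
  then have "half_var_normal = distr half_var_normal borel uminus"
    by (simp add: lborel_distr_uminus normal_density_def)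
  then show ?thesis
    by (metis distr_cong sets_lborel)
qed

lemma distr_uminus_cgauss: "distr cgauss borel uminus = cgauss"
proof -
  interpret prob_space half_var_normal by (rule prob_space_half_var_normal)
  let ?P = "half_var_normal \<Otimes>\<^sub>M half_var_normal"
  have "distr cgauss borel uminus = distr ?P borel (\<lambda>p. - (case p of (x, y) \<Rightarrow> Complex x y))"
    unfolding cgauss_def by (subst distr_distr) (auto simp: measurable_half_var_normal_pair_iff comp_def)
  also have "\<dots> = distr ?P borel ((\<lambda>(x, y). Complex x y) \<circ> (\<lambda>(x, y). (- x, - y)))"
    by (intro distr_cong) (auto simp: complex_eq_iff)
  also have "\<dots> = distr (distr ?P (borel \<Otimes>\<^sub>M borel) (\<lambda>(x, y). (- x, - y))) borel (\<lambda>(x, y). Complex x y)"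
    by (rule distr_distr[symmetric]) (simp_all add: measurable_half_var_normal_pair_iff)
  also have "distr ?P (borel \<Otimes>\<^sub>M borel) (\<lambda>(x, y). (- x, - y))
      = distr half_var_normal borel uminus \<Otimes>\<^sub>M distr half_var_normal borel uminus"
    by (rule pair_measure_distr[symmetric])
       (auto simp: distr_uminus_half_var_normal prob_space_half_var_normal intro: prob_space_imp_sigma_finite)
  finally show ?thesis
    unfolding cgauss_def by (simp add: distr_uminus_half_var_normal)
qed

section \<open>Matrices of independent complex Gaussians\<close>

lemma prob_space_PiM_cgauss: "prob_space (PiM I (\<lambda>_. cgauss))"
  by (intro prob_space_PiM prob_space_cgauss)

lemma borel_measurable_PiM_cgauss_component [measurable]:
  "(\<lambda>G. G i) \<in> borel_measurable (PiM I (\<lambda>_. cgauss))"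
proof (cases "i \<in> I")
  case True
  then show ?thesis
    using measurable_component_singleton[of i I "\<lambda>_. cgauss"] by (simp add: measurable_cgauss_iff)
next
  case False
  then have "(\<lambda>G. G i) \<in> borel_measurable (PiM I (\<lambda>_. cgauss)) \<longleftrightarrow> (\<lambda>_. undefined :: complex) \<in> borel_measurable (PiM I (\<lambda>_. cgauss))"
    by (intro measurable_cong) (auto simp: space_PiM PiE_def extensional_def)
  then show ?thesis by simp
qed

lemma has_bochner_integral_PiM_cgauss_component:
  fixes g :: "complex \<Rightarrow> real"
  assumes "i \<in> I" and [measurable]: "g \<in> borel_measurable borel"
    and "has_bochner_integral cgauss g c"
  shows "has_bochner_integral (PiM I (\<lambda>_. cgauss)) (\<lambda>G. g (G i)) c"
proof -
  have component: "(\<lambda>G. G i) \<in> measurable (PiM I (\<lambda>_. cgauss)) cgauss"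
    by (simp add: measurable_cgauss_iff)
  have g: "g \<in> borel_measurable cgauss"
    by (simp add: measurable_cong_sets[OF sets_cgauss refl])
  have "distr (PiM I (\<lambda>_. cgauss)) cgauss (\<lambda>G. G i) = cgauss"
    using prob_space_cgauss \<open>i \<in> I\<close> by (rule distr_PiM_component)
  then show ?thesis
    using assms(3) integrable_distr_eq[OF component g] integral_distr[OF component g]
    by (simp add: has_bochner_integral_iff)
qed

definition negate_at :: "'i set \<Rightarrow> 'i \<Rightarrow> ('i \<Rightarrow> complex) \<Rightarrow> 'i \<Rightarrow> complex" where
  "negate_at I j G = (\<lambda>i\<in>I. if i = j then - G i else G i)"

lemma measurable_negate_at [measurable]:
  "negate_at I j \<in> measurable (PiM I (\<lambda>_. cgauss)) (PiM I (\<lambda>_. cgauss))"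
  unfolding negate_at_def by (rule measurable_restrict) (simp add: measurable_cgauss_iff)

lemma distr_negate_at_PiM_cgauss:
  fixes I :: "'i set"
  assumes I: "finite I" and "j \<in> I"
  shows "distr (PiM I (\<lambda>_. cgauss)) (PiM I (\<lambda>_. cgauss)) (negate_at I j) = PiM I (\<lambda>_. cgauss)"
proof -
  interpret product_prob_space "\<lambda>_::'i. cgauss"
    by (intro product_prob_spaceI prob_space_cgauss)
  let ?M = "PiM I (\<lambda>_. cgauss)"
  show ?thesis
  proof (rule PiM_eqI[OF I])
    fix A assume A: "\<And>i. i \<in> I \<Longrightarrow> A i \<in> sets cgauss"
    let ?A' = "\<lambda>i. if i = j then uminus -` A i else A i"
    have A': "?A' i \<in> sets cgauss" if "i \<in> I" for i
      using A[OF that] measurable_sets_borel[of "uminus :: complex \<Rightarrow> complex" borel "A i"] by auto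
    have "negate_at I j -` Pi\<^sub>E I A \<inter> space ?M = Pi\<^sub>E I ?A'"
      by (auto simp: negate_at_def space_PiM PiE_def Pi_def extensional_def split: if_splits)
    then have "emeasure (distr ?M ?M (negate_at I j)) (Pi\<^sub>E I A) = (\<Prod>i\<in>I. emeasure cgauss (?A' i))"
      using A A' by (simp add: emeasure_distr sets_PiM_I_finite I emeasure_PiM)
    also have "\<dots> = (\<Prod>i\<in>I. emeasure cgauss (A i))"
    proof (rule prod.cong[OF refl])
      fix i assume "i \<in> I"
      have "emeasure cgauss (uminus -` A i) = emeasure (distr cgauss borel uminus) (A i)"
        using A[OF \<open>i \<in> I\<close>]
        by (subst emeasure_distr) (auto simp: measurable_cong_sets[OF sets_cgauss refl])
      then show "emeasure cgauss (?A' i) = emeasure cgauss (A i)"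
        by (cases "i = j") (simp_all add: distr_uminus_cgauss)
    qed
    finally show "emeasure (distr ?M ?M (negate_at I j)) (Pi\<^sub>E I A) = (\<Prod>i\<in>I. emeasure cgauss (A i))" .
  qed simp
qed

lemma integral_negate_at_PiM_cgauss:
  fixes f :: "('i \<Rightarrow> complex) \<Rightarrow> real"
  assumes "finite I" "j \<in> I" and [measurable]: "f \<in> borel_measurable (PiM I (\<lambda>_. cgauss))"
  shows "(\<integral>G. f (negate_at I j G) \<partial>PiM I (\<lambda>_. cgauss)) = (\<integral>G. f G \<partial>PiM I (\<lambda>_. cgauss))"
  using integral_distr[OF measurable_negate_at[of I j] assms(3)] distr_negate_at_PiM_cgauss[OF assms(1,2)]
  by simp

lemma borel_measurable_cnj [measurable]: "cnj \<in> borel_measurable borel"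
  by (intro borel_measurable_continuous_onI continuous_intros)

lemma cmod_power2_eq_Re_mult_cnj: "(cmod z)\<^sup>2 = Re (z * cnj z)"
  by (metis Re_complex_of_real complex_norm_square)

lemma cmod_sum_power2:
  fixes x :: "'a \<Rightarrow> complex"
  shows "(cmod (\<Sum>n\<in>S. x n))\<^sup>2 = (\<Sum>n\<in>S. \<Sum>m\<in>S. Re (x n * cnj (x m)))"
  by (simp add: cmod_power2_eq_Re_mult_cnj cnj_sum sum_product Re_sum)

lemma integrable_cross_term_PiM_cgauss:
  fixes u v :: "('i \<Rightarrow> complex) \<Rightarrow> complex"
  assumes "i \<in> I" "j \<in> I"
    and [measurable]: "u \<in> borel_measurable (PiM I (\<lambda>_. cgauss))" "v \<in> borel_measurable (PiM I (\<lambda>_. cgauss))"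
    and u: "\<And>G. cmod (u G) = a" and v: "\<And>G. cmod (v G) = b"
  shows "integrable (PiM I (\<lambda>_. cgauss)) (\<lambda>G. Re (G i * u G * cnj (G j * v G)))"
proof (rule Bochner_Integration.integrable_bound)
  have "has_bochner_integral (PiM I (\<lambda>_. cgauss)) (\<lambda>G. (cmod (G k))\<^sup>2) 1" if "k \<in> I" for k
    using that by (intro has_bochner_integral_PiM_cgauss_component has_bochner_integral_cgauss_norm_sq) auto
  then show "integrable (PiM I (\<lambda>_. cgauss)) (\<lambda>G. a * b * ((cmod (G i))\<^sup>2 + (cmod (G j))\<^sup>2))"
    using assms(1,2) by (auto simp: has_bochner_integral_iff)
  have ab: "0 \<le> a" "0 \<le> b"
    using u v norm_ge_zero by metis+
  show "AE G in PiM I (\<lambda>_. cgauss).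
      norm (Re (G i * u G * cnj (G j * v G))) \<le> norm (a * b * ((cmod (G i))\<^sup>2 + (cmod (G j))\<^sup>2))"
  proof (intro AE_I2)
    fix G :: "'i \<Rightarrow> complex"
    have "norm (Re (G i * u G * cnj (G j * v G))) \<le> a * b * (cmod (G i) * cmod (G j))"
      using abs_Re_le_cmod[of "G i * u G * cnj (G j * v G)"] by (simp add: norm_mult u v mult_ac)
    also have "\<dots> \<le> a * b * ((cmod (G i))\<^sup>2 + (cmod (G j))\<^sup>2)"
    proof (rule mult_left_mono)
      show "cmod (G i) * cmod (G j) \<le> (cmod (G i))\<^sup>2 + (cmod (G j))\<^sup>2"
        using sum_squares_bound[of "cmod (G i)" "cmod (G j)"]
          mult_nonneg_nonneg[OF norm_ge_zero norm_ge_zero, of "G i" "G j"]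
        by linarith
    qed (use ab in simp)
    finally show "norm (Re (G i * u G * cnj (G j * v G))) \<le> norm (a * b * ((cmod (G i))\<^sup>2 + (cmod (G j))\<^sup>2))"
      using ab by simp
  qed
qed simp

text \<open>Negating \<open>G i\<close>, which \<open>u\<close> and \<open>v\<close> do not see, flips the sign of the integrand.\<close>
lemma integral_cross_term_PiM_cgauss:
  fixes u v :: "('i \<Rightarrow> complex) \<Rightarrow> complex"
  assumes I: "finite I" and "i \<in> I" "j \<in> I" "i \<noteq> j"
    and [measurable]: "u \<in> borel_measurable (PiM I (\<lambda>_. cgauss))" "v \<in> borel_measurable (PiM I (\<lambda>_. cgauss))"
    and u: "\<And>G. u (negate_at I i G) = u G" and v: "\<And>G. v (negate_at I i G) = v G"
  shows "(\<integral>G. Re (G i * u G * cnj (G j * v G)) \<partial>PiM I (\<lambda>_. cgauss)) = 0"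
proof -
  let ?f = "\<lambda>G. Re (G i * u G * cnj (G j * v G))"
  have "negate_at I i G i = - G i" "negate_at I i G j = G j" for G
    using assms(2-4) by (simp_all add: negate_at_def)
  then have flip: "?f (negate_at I i G) = - ?f G" for G
    by (simp add: u v)
  have "?f \<in> borel_measurable (PiM I (\<lambda>_. cgauss))"
    by measurable
  then have "(\<integral>G. ?f G \<partial>PiM I (\<lambda>_. cgauss)) = (\<integral>G. ?f (negate_at I i G) \<partial>PiM I (\<lambda>_. cgauss))"
    by (rule integral_negate_at_PiM_cgauss[OF I \<open>i \<in> I\<close>, symmetric])
  also have "\<dots> = - (\<integral>G. ?f G \<partial>PiM I (\<lambda>_. cgauss))"
    unfolding flip by (rule Bochner_Integration.integral_minus)
  finally show ?thesis
    by linarith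
qed

lemma integral_cmod_sum_power2_sign_symmetric:
  fixes I :: "'i set" and \<iota> :: "'n \<Rightarrow> 'i"
    and w :: "('i \<Rightarrow> complex) \<Rightarrow> 'n \<Rightarrow> complex" and r :: "'n \<Rightarrow> real"
  assumes I: "finite I" and S: "finite S" and \<iota>: "inj_on \<iota> S" "\<iota> ` S \<subseteq> I"
    and w_meas [measurable]: "\<And>n. (\<lambda>G. w G n) \<in> borel_measurable (PiM I (\<lambda>_. cgauss))"
    and w_norm: "\<And>G n. cmod (w G n) = r n"
    and w_sign: "\<And>G n m. n \<in> S \<Longrightarrow> m \<in> S \<Longrightarrow> w (negate_at I (\<iota> m) G) n = w G n"
  shows "integrable (PiM I (\<lambda>_. cgauss)) (\<lambda>G. (cmod (\<Sum>n\<in>S. G (\<iota> n) * w G n))\<^sup>2)"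
    and "(\<integral>G. (cmod (\<Sum>n\<in>S. G (\<iota> n) * w G n))\<^sup>2 \<partial>PiM I (\<lambda>_. cgauss)) = (\<Sum>n\<in>S. (r n)\<^sup>2)"
proof -
  let ?M = "PiM I (\<lambda>_. cgauss)"
  define f where "f n m G = Re (G (\<iota> n) * w G n * cnj (G (\<iota> m) * w G m))" for n m G
  have f_int: "integrable ?M (f n m)" if "n \<in> S" "m \<in> S" for n m
    unfolding f_def using \<iota>(2) that by (intro integrable_cross_term_PiM_cgauss[where a = "r n" and b = "r m"] w_meas w_norm) auto
  have f_integral: "(\<integral>G. f n m G \<partial>?M) = (if n = m then (r n)\<^sup>2 else 0)" if "n \<in> S" "m \<in> S" for n m
  proof (cases "n = m")
    case True
    have "f n m G = (cmod (G (\<iota> n) * w G n))\<^sup>2" for G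
      unfolding f_def True by (rule cmod_power2_eq_Re_mult_cnj[symmetric])
    then have "f n m G = (r n)\<^sup>2 * (cmod (G (\<iota> n)))\<^sup>2" for G
      by (simp add: norm_mult w_norm power_mult_distrib)
    moreover have "has_bochner_integral ?M (\<lambda>G. (cmod (G (\<iota> n)))\<^sup>2) 1"
      using \<iota>(2) that
      by (intro has_bochner_integral_PiM_cgauss_component has_bochner_integral_cgauss_norm_sq) auto
    ultimately show ?thesis
      using True by (simp add: has_bochner_integral_iff)
  next
    case False
    then have "\<iota> n \<noteq> \<iota> m"
      using \<iota>(1) that by (auto dest: inj_onD)
    then have "(\<integral>G. f n m G \<partial>?M) = 0"
      unfolding f_def using \<iota>(2) that by (intro integral_cross_term_PiM_cgauss I w_meas w_sign) auto
    with False show ?thesis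
      by simp
  qed
  have expand: "(cmod (\<Sum>n\<in>S. G (\<iota> n) * w G n))\<^sup>2 = (\<Sum>n\<in>S. \<Sum>m\<in>S. f n m G)" for G
    unfolding f_def by (rule cmod_sum_power2)
  show "integrable ?M (\<lambda>G. (cmod (\<Sum>n\<in>S. G (\<iota> n) * w G n))\<^sup>2)"
    unfolding expand using f_int by (intro Bochner_Integration.integrable_sum) auto
  have "(\<integral>G. (cmod (\<Sum>n\<in>S. G (\<iota> n) * w G n))\<^sup>2 \<partial>?M) = (\<Sum>n\<in>S. \<Sum>m\<in>S. \<integral>G. f n m G \<partial>?M)"
    unfolding expand using f_int
    by (simp add: Bochner_Integration.integral_sum Bochner_Integration.integrable_sum)
  also have "\<dots> = (\<Sum>n\<in>S. (r n)\<^sup>2)"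
    using S by (simp add: f_integral sum.delta sum.delta' cong: sum.cong)
  finally show "(\<integral>G. (cmod (\<Sum>n\<in>S. G (\<iota> n) * w G n))\<^sup>2 \<partial>?M) = (\<Sum>n\<in>S. (r n)\<^sup>2)" .
qed

lemma (in prob_space) square_integral_le_integral_square:
  fixes X :: "'a \<Rightarrow> real"
  assumes "integrable M X" "integrable M (\<lambda>x. (X x)\<^sup>2)"
  shows "(\<integral>x. X x \<partial>M)\<^sup>2 \<le> (\<integral>x. (X x)\<^sup>2 \<partial>M)"
  using variance_eq[OF assms] variance_positive[of X] by linarith

lemma integral_weighted_norm_sum_power2_ge:
  fixes I :: "'i set" and \<iota> :: "'n \<Rightarrow> 'i" and c :: "'n \<Rightarrow> real"
  assumes "\<iota> ` S \<subseteq> I"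
  shows "integrable (PiM I (\<lambda>_. cgauss)) (\<lambda>G. (\<Sum>n\<in>S. c n * cmod (G (\<iota> n)))\<^sup>2)"
    and "(sqrt pi / 2 * (\<Sum>n\<in>S. c n))\<^sup>2
      \<le> (\<integral>G. (\<Sum>n\<in>S. c n * cmod (G (\<iota> n)))\<^sup>2 \<partial>PiM I (\<lambda>_. cgauss))"
proof -
  let ?M = "PiM I (\<lambda>_. cgauss)" and ?X = "\<lambda>G. \<Sum>n\<in>S. c n * cmod (G (\<iota> n))"
  interpret prob_space ?M by (rule prob_space_PiM_cgauss)
  have norm: "has_bochner_integral ?M (\<lambda>G. cmod (G (\<iota> n))) (sqrt pi / 2)"
    and norm_sq: "has_bochner_integral ?M (\<lambda>G. (cmod (G (\<iota> n)))\<^sup>2) 1" if "n \<in> S" for n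
    using assms that
    by (auto intro!: has_bochner_integral_PiM_cgauss_component
        has_bochner_integral_cgauss_norm has_bochner_integral_cgauss_norm_sq)
  have "has_bochner_integral ?M ?X ((\<Sum>n\<in>S. c n) * (sqrt pi / 2))"
    unfolding sum_distrib_right using norm
    by (intro has_bochner_integral_sum has_bochner_integral_mult_right) auto
  then have X: "integrable ?M ?X" "(\<integral>G. ?X G \<partial>?M) = sqrt pi / 2 * (\<Sum>n\<in>S. c n)"
    by (auto simp: has_bochner_integral_iff mult.commute)
  show X2: "integrable ?M (\<lambda>G. (?X G)\<^sup>2)"
  proof (rule Bochner_Integration.integrable_bound)
    show "integrable ?M (\<lambda>G. (\<Sum>n\<in>S. (c n)\<^sup>2) * (\<Sum>n\<in>S. (cmod (G (\<iota> n)))\<^sup>2))"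
      using norm_sq by (intro integrable_mult_right Bochner_Integration.integrable_sum)
        (auto simp: has_bochner_integral_iff)
    show "AE G in ?M. norm ((?X G)\<^sup>2) \<le> norm ((\<Sum>n\<in>S. (c n)\<^sup>2) * (\<Sum>n\<in>S. (cmod (G (\<iota> n)))\<^sup>2))"
      using Cauchy_Schwarz_ineq_sum by (intro AE_I2) (simp add: sum_nonneg)
  qed simp
  show "(sqrt pi / 2 * (\<Sum>n\<in>S. c n))\<^sup>2 \<le> (\<integral>G. (?X G)\<^sup>2 \<partial>?M)"
    using square_integral_le_integral_square[OF X(1) X2] by (simp only: X(2))
qed

section \<open>The objective and its maximum\<close>

lemma sum_affine_real: "(\<Sum>n=1..p. a + b * real n) = real p * a + b * (real p * (real p + 1) / 2)"
  by (induction p) (simp_all add: field_simps)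

lemma sum_two_mult_minus_power2:
  "(\<Sum>m=1..K. (2 * real m - c)\<^sup>2)
    = 2 * real K * (real K + 1) * (2 * real K + 1) / 3 - 2 * c * real K * (real K + 1) + real K * c\<^sup>2"
  by (induction K) (simp_all add: field_simps power2_eq_square)

lemma sum_dentry_power2: "(\<Sum>m=1..K. (dentry K m)\<^sup>2) = real K * ((real K)\<^sup>2 - 1) / 3"
proof -
  have "(\<Sum>m=1..K. (dentry K m)\<^sup>2) = (\<Sum>m=1..K. (2 * real m - (real K + 1))\<^sup>2)"
    by (intro sum.cong refl) (simp add: dentry_def algebra_simps)
  also have "\<dots> = real K * ((real K)\<^sup>2 - 1) / 3"
    unfolding sum_two_mult_minus_power2 by (simp add: field_simps power2_eq_square)
  finally show ?thesis .
qed

lemma nat_mult_power2_minus_one_nonneg: "0 \<le> real K * ((real K)\<^sup>2 - 1) / 3"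
  by (cases "K = 0") (simp_all add: one_le_power)

lemma sum_abs_dentry:
  assumes "even N"
  shows "(\<Sum>n=1..N. \<bar>dentry N n\<bar>) = (real N)\<^sup>2 / 2"
proof -
  obtain p where p: "N = p + p" using assms by (metis evenE mult_2)
  have "(\<Sum>n=1..p. \<bar>dentry N n\<bar>) = (\<Sum>n=1..p. (2 * real p + 1) + (-2) * real n)"
    by (intro sum.cong refl) (auto simp: dentry_def p)
  also have "\<dots> = (real p)\<^sup>2"
    unfolding sum_affine_real by (simp add: field_simps power2_eq_square)
  finally have lower_half: "(\<Sum>n=1..p. \<bar>dentry N n\<bar>) = (real p)\<^sup>2" .
  have "(\<Sum>n=p+1..p+p. \<bar>dentry N n\<bar>) = (\<Sum>n=1..p. \<bar>dentry N (n + p)\<bar>)"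
    using sum.shift_bounds_cl_nat_ivl[of "\<lambda>n. \<bar>dentry N n\<bar>" 1 p p] by (simp add: add.commute)
  also have "\<dots> = (\<Sum>n=1..p. (-1) + 2 * real n)"
    by (intro sum.cong refl) (auto simp: dentry_def p)
  also have "\<dots> = (real p)\<^sup>2"
    unfolding sum_affine_real by (simp add: field_simps power2_eq_square)
  finally have upper_half: "(\<Sum>n=p+1..p+p. \<bar>dentry N n\<bar>) = (real p)\<^sup>2" .
  have "(\<Sum>n=1..N. \<bar>dentry N n\<bar>) = (\<Sum>n=1..p. \<bar>dentry N n\<bar>) + (\<Sum>n=p+1..p+p. \<bar>dentry N n\<bar>)"
    unfolding p by (rule sum.ub_add_nat) simp
  also have "\<dots> = (real p)\<^sup>2 + (real p)\<^sup>2"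
    by (simp only: lower_half upper_half)
  finally show ?thesis
    by (simp add: p power2_eq_square)
qed

lemma norm_avec [simp]: "cmod (avec dh lam N \<theta> n) = 1"
  by (simp add: avec_def)

lemma norm_bvec [simp]: "cmod (bvec dh lam N \<theta> n) = 1"
  by (simp add: bvec_def)

lemma cmod_sum_mult_power2_le:
  fixes z u :: "'a \<Rightarrow> complex"
  shows "(cmod (\<Sum>n\<in>S. z n * u n))\<^sup>2 \<le> (\<Sum>n\<in>S. (cmod (u n))\<^sup>2) * (\<Sum>n\<in>S. (cmod (z n))\<^sup>2)"
proof -
  have "cmod (\<Sum>n\<in>S. z n * u n) \<le> (\<Sum>n\<in>S. cmod (z n) * cmod (u n))"
    by (rule order_trans[OF norm_sum]) (simp add: norm_mult)
  then have "(cmod (\<Sum>n\<in>S. z n * u n))\<^sup>2 \<le> (\<Sum>n\<in>S. cmod (z n) * cmod (u n))\<^sup>2"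
    by (rule power_mono) simp
  also have "\<dots> \<le> (\<Sum>n\<in>S. (cmod (z n))\<^sup>2) * (\<Sum>n\<in>S. (cmod (u n))\<^sup>2)"
    by (rule Cauchy_Schwarz_ineq_sum)
  finally show ?thesis
    by (simp add: mult.commute)
qed

definition sq_frobenius :: "nat \<Rightarrow> nat \<Rightarrow> (nat \<times> nat \<Rightarrow> complex) \<Rightarrow> real" where
  "sq_frobenius N Mt G = (\<Sum>k=1..Mt. \<Sum>n=1..N. (cmod (G (n, k)))\<^sup>2)"

lemma sum_cmod_column_power2_le:
  "(\<Sum>k=1..Mt. (cmod (\<Sum>n=1..N. G (n, k) * u n))\<^sup>2) \<le> (\<Sum>n=1..N. (cmod (u n))\<^sup>2) * sq_frobenius N Mt G"
proof -
  have "(\<Sum>k=1..Mt. (cmod (\<Sum>n=1..N. G (n, k) * u n))\<^sup>2)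
      \<le> (\<Sum>k=1..Mt. (\<Sum>n=1..N. (cmod (u n))\<^sup>2) * (\<Sum>n=1..N. (cmod (G (n, k)))\<^sup>2))"
    by (intro sum_mono cmod_sum_mult_power2_le)
  then show ?thesis
    by (simp only: sq_frobenius_def sum_distrib_left)
qed

text \<open>The value of \<open>\<parallel>a\<parallel>\<^sup>2 \<parallel>D\<^sub>2 b\<parallel>\<^sup>2 + \<parallel>b\<parallel>\<^sup>2 \<parallel>D\<^sub>1 a\<parallel>\<^sup>2\<close>: the steering vectors are unimodular, so
  \<open>\<parallel>a\<parallel>\<^sup>2 = N\<close>, \<open>\<parallel>b\<parallel>\<^sup>2 = M\<^sub>r\<close> and \<open>\<parallel>D\<^sub>1 a\<parallel>\<^sup>2 = \<Sum>\<^sub>n d\<^sub>n\<^sup>2 = N(N\<^sup>2-1)/3\<close>.\<close>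
definition steering_gain :: "nat \<Rightarrow> nat \<Rightarrow> real" where
  "steering_gain N Mr = real N * (real Mr * ((real Mr)\<^sup>2 - 1) / 3) + real Mr * (real N * ((real N)\<^sup>2 - 1) / 3)"

lemma obj4_eq:
  "obj4 dh lam N Mt Mr \<theta> G \<phi> =
     (\<Sum>k=1..Mt. (cmod (\<Sum>n=1..N. G (n, k) * (exp (\<i> * complex_of_real (\<phi> n)) * avec dh lam N \<theta> n)))\<^sup>2)
       * (real Mr * ((real Mr)\<^sup>2 - 1) / 3)
   + real Mr * (\<Sum>k=1..Mt. (cmod (\<Sum>n=1..N. G (n, k) * (exp (\<i> * complex_of_real (\<phi> n))
       * complex_of_real (dentry N n) * avec dh lam N \<theta> n)))\<^sup>2)"
proof -
  have "(\<Sum>m=1..Mr. (cmod (complex_of_real (dentry Mr m) * bvec dh lam Mr \<theta> m))\<^sup>2)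
      = (\<Sum>m=1..Mr. (dentry Mr m)\<^sup>2)"
    by (intro sum.cong refl) (simp add: norm_mult)
  then show ?thesis
    unfolding obj4_def sum_dentry_power2 by (simp add: mult.assoc)
qed

lemma obj4_nonneg: "0 \<le> obj4 dh lam N Mt Mr \<theta> G \<phi>"
  unfolding obj4_def by (intro add_nonneg_nonneg mult_nonneg_nonneg sum_nonneg) auto

lemma obj4_le: "obj4 dh lam N Mt Mr \<theta> G \<phi> \<le> steering_gain N Mr * sq_frobenius N Mt G"
proof -
  let ?e = "\<lambda>n. exp (\<i> * complex_of_real (\<phi> n))" and ?a = "avec dh lam N \<theta>"
  have a: "(\<Sum>n=1..N. (cmod (?e n * ?a n))\<^sup>2) = real N"
    by (simp add: norm_mult)
  have Da: "(\<Sum>n=1..N. (cmod (?e n * complex_of_real (dentry N n) * ?a n))\<^sup>2) = real N * ((real N)\<^sup>2 - 1) / 3"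
    unfolding sum_dentry_power2[symmetric] by (intro sum.cong refl) (simp add: norm_mult)
  let ?S1 = "\<Sum>k=1..Mt. (cmod (\<Sum>n=1..N. G (n, k) * (?e n * ?a n)))\<^sup>2"
    and ?S2 = "\<Sum>k=1..Mt. (cmod (\<Sum>n=1..N. G (n, k) * (?e n * complex_of_real (dentry N n) * ?a n)))\<^sup>2"
    and ?F = "sq_frobenius N Mt G" and ?A = "real Mr * ((real Mr)\<^sup>2 - 1) / 3"
  have "?S1 \<le> real N * ?F"
    using sum_cmod_column_power2_le[where N = N and Mt = Mt and G = G and u = "\<lambda>n. ?e n * ?a n"]
    unfolding a .
  moreover have "?S2 \<le> real N * ((real N)\<^sup>2 - 1) / 3 * ?F"
    using sum_cmod_column_power2_le[where N = N and Mt = Mt and G = G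
        and u = "\<lambda>n. ?e n * complex_of_real (dentry N n) * ?a n"]
    unfolding Da .
  moreover have "0 \<le> ?A"
    by (rule nat_mult_power2_minus_one_nonneg)
  ultimately have "?S1 * ?A + real Mr * ?S2 \<le> real N * ?F * ?A + real Mr * (real N * ((real N)\<^sup>2 - 1) / 3 * ?F)"
    by (intro add_mono mult_right_mono mult_left_mono) auto
  then show ?thesis
    unfolding obj4_eq steering_gain_def by (rule order_trans) (simp add: algebra_simps)
qed

lemma bdd_above_obj4: "bdd_above (range (obj4 dh lam N Mt Mr \<theta> G))"
  using obj4_le by (rule bdd_aboveI2)

lemma obj4_le_gamma4: "obj4 dh lam N Mt Mr \<theta> G \<phi> \<le> gamma4 dh lam N Mt Mr \<theta> G"
  unfolding gamma4_def by (rule cSUP_upper[OF _ bdd_above_obj4]) simp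

lemma gamma4_le: "gamma4 dh lam N Mt Mr \<theta> G \<le> steering_gain N Mr * sq_frobenius N Mt G"
  unfolding gamma4_def by (rule cSUP_least) (simp_all add: obj4_le)

lemma gamma4_nonneg: "0 \<le> gamma4 dh lam N Mt Mr \<theta> G"
  using obj4_nonneg obj4_le_gamma4 by (rule order_trans)

lemma continuous_on_obj4: "continuous_on UNIV (obj4 dh lam N Mt Mr \<theta> G)"
  unfolding obj4_def by (intro continuous_intros continuous_on_product_coordinates)

lemma borel_measurable_SUP_continuous:
  fixes f :: "'a \<Rightarrow> 'b::second_countable_topology \<Rightarrow> real"
  assumes meas: "\<And>y. (\<lambda>x. f x y) \<in> borel_measurable M"
    and cont: "\<And>x. continuous_on UNIV (f x)"
    and bdd: "\<And>x. bdd_above (range (f x))"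
  shows "(\<lambda>x. SUP y. f x y) \<in> borel_measurable M"
proof -
  obtain D :: "'b set" where D: "countable D" "\<And>U. open U \<Longrightarrow> U \<noteq> {} \<Longrightarrow> \<exists>d\<in>D. d \<in> U"
    using countable_dense_exists by blast
  have "D \<noteq> {}" using D(2)[of UNIV] by auto
  have "(SUP y. f x y) = (SUP d\<in>D. f x d)" for x
  proof (rule antisym)
    show "(SUP d\<in>D. f x d) \<le> (SUP y. f x y)"
      using \<open>D \<noteq> {}\<close> bdd by (rule cSUP_subset_mono) auto
    show "(SUP y. f x y) \<le> (SUP d\<in>D. f x d)"
    proof (rule cSUP_least)
      fix y
      show "f x y \<le> (SUP d\<in>D. f x d)"
      proof (rule ccontr)
        assume "\<not> ?thesis"
        then have "open (f x -` {(SUP d\<in>D. f x d)<..})" "y \<in> f x -` {(SUP d\<in>D. f x d)<..}"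
          using open_vimage[OF open_greaterThan cont] by auto
        then obtain d where "d \<in> D" "(SUP d\<in>D. f x d) < f x d"
          using D(2) by blast
        moreover have "bdd_above (f x ` D)"
          using bdd by (rule bdd_above_mono) auto
        ultimately show False
          using cSUP_upper[of d D "f x"] by linarith
      qed
    qed simp
  qed
  moreover have "(\<lambda>x. SUP d\<in>D. f x d) \<in> borel_measurable M"
    using D(1) meas by (rule borel_measurable_cSUP) (rule bdd_above_mono[OF bdd], auto)
  ultimately show ?thesis
    by simp
qed

lemma borel_measurable_gamma4 [measurable]:
  "gamma4 dh lam N Mt Mr \<theta> \<in> borel_measurable (PiM I (\<lambda>_. cgauss))"
  unfolding gamma4_def
  by (rule borel_measurable_SUP_continuous[OF _ continuous_on_obj4 bdd_above_obj4])
     (unfold obj4_def, measurable)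

lemma has_bochner_integral_sq_frobenius:
  "has_bochner_integral (Gt_measure N Mt) (sq_frobenius N Mt) (real N * real Mt)"
proof -
  have "has_bochner_integral (Gt_measure N Mt) (sq_frobenius N Mt) (\<Sum>k=1..Mt. \<Sum>n=1..N. 1)"
    unfolding sq_frobenius_def[abs_def] Gt_measure_def
    by (intro has_bochner_integral_sum has_bochner_integral_PiM_cgauss_component
        has_bochner_integral_cgauss_norm_sq) auto
  then show ?thesis
    by (simp add: mult.commute)
qed

lemma integrable_gamma4: "integrable (Gt_measure N Mt) (gamma4 dh lam N Mt Mr \<theta>)"
proof (rule Bochner_Integration.integrable_bound)
  show "integrable (Gt_measure N Mt) (\<lambda>G. steering_gain N Mr * sq_frobenius N Mt G)"
    using has_bochner_integral_sq_frobenius by (auto simp: has_bochner_integral_iff)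
  show "AE G in Gt_measure N Mt. norm (gamma4 dh lam N Mt Mr \<theta> G) \<le> norm (steering_gain N Mr * sq_frobenius N Mt G)"
    using gamma4_nonneg gamma4_le by (intro AE_I2) (metis abs_of_nonneg order_trans real_norm_def)
qed (simp add: Gt_measure_def)

lemma integral_gamma4_le:
  "(\<integral>G. gamma4 dh lam N Mt Mr \<theta> G \<partial>Gt_measure N Mt) \<le> steering_gain N Mr * (real N * real Mt)"
proof -
  have "(\<integral>G. gamma4 dh lam N Mt Mr \<theta> G \<partial>Gt_measure N Mt)
      \<le> (\<integral>G. steering_gain N Mr * sq_frobenius N Mt G \<partial>Gt_measure N Mt)"
    using has_bochner_integral_sq_frobenius
    by (intro integral_mono integrable_gamma4 gamma4_le) (auto simp: has_bochner_integral_iff)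
  also have "\<dots> = steering_gain N Mr * (real N * real Mt)"
    using has_bochner_integral_sq_frobenius by (simp add: has_bochner_integral_iff)
  finally show ?thesis .
qed

section \<open>Aligning the phases with the first column\<close>

text \<open>The value \<open>1\<close> at \<open>0\<close> keeps \<open>\<bar>phase_conj z\<bar> = 1\<close> and agrees with \<open>exp (-\<i> Arg 0)\<close>.\<close>
definition phase_conj :: "complex \<Rightarrow> complex" where
  "phase_conj z = (if z = 0 then 1 else cnj (sgn z))"

lemma norm_phase_conj [simp]: "cmod (phase_conj z) = 1"
  by (simp add: phase_conj_def norm_sgn)

lemma mult_phase_conj: "z * phase_conj z = complex_of_real (cmod z)"
proof (cases "z = 0")
  case False
  have "z * cnj (sgn z) = (z * cnj z) /\<^sub>R cmod z"
    by (simp add: sgn_div_norm complex_cnj_scaleR)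
  also have "\<dots> = complex_of_real ((cmod z)\<^sup>2 / cmod z)"
    by (simp add: complex_norm_square[symmetric] scaleR_conv_of_real divide_inverse mult.commute)
  also have "\<dots> = complex_of_real (cmod z)"
    using False by (simp add: power2_eq_square)
  finally show ?thesis
    using False by (simp add: phase_conj_def)
qed (simp add: phase_conj_def)

lemma exp_Arg_phase_conj: "exp (\<i> * complex_of_real (- Arg z)) = phase_conj z"
proof (cases "z = 0")
  case False
  then have "cis (- Arg z) = cnj (sgn z)"
    by (simp add: cis_Arg flip: cis_cnj)
  then show ?thesis
    using False by (simp add: phase_conj_def cis_conv_exp)
qed (simp add: phase_conj_def Arg_zero)

lemma borel_measurable_phase_conj [measurable]: "phase_conj \<in> borel_measurable borel"
  unfolding phase_conj_def[abs_def] by measurable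

text \<open>The entries of \<open>\<Phi> D\<^sub>1 a(\<theta>)\<close> when \<open>\<Phi>\<close> cancels the phases of the first column
  of \<open>G\<^sup>T \<Phi>\<^sup>T D\<^sub>1 a(\<theta>)\<close>.\<close>
definition aligned_weight :: "real \<Rightarrow> real \<Rightarrow> nat \<Rightarrow> real \<Rightarrow> (nat \<times> nat \<Rightarrow> complex) \<Rightarrow> nat \<Rightarrow> complex" where
  "aligned_weight dh lam N \<theta> G n =
     phase_conj (G (n, 1) * complex_of_real (dentry N n) * avec dh lam N \<theta> n)
       * complex_of_real (dentry N n) * avec dh lam N \<theta> n"

lemma norm_aligned_weight: "cmod (aligned_weight dh lam N \<theta> G n) = \<bar>dentry N n\<bar>"
  by (simp add: aligned_weight_def norm_mult)

lemma borel_measurable_aligned_weight [measurable]: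
  "(\<lambda>G. aligned_weight dh lam N \<theta> G n) \<in> borel_measurable (PiM I (\<lambda>_. cgauss))"
  unfolding aligned_weight_def by measurable

lemma gamma4_ge_aligned:
  assumes "1 \<le> Mt"
  shows "real Mr * ((\<Sum>n=1..N. \<bar>dentry N n\<bar> * cmod (G (n, 1)))\<^sup>2
      + (\<Sum>k=2..Mt. (cmod (\<Sum>n=1..N. G (n, k) * aligned_weight dh lam N \<theta> G n))\<^sup>2))
    \<le> gamma4 dh lam N Mt Mr \<theta> G"
proof -
  let ?a = "avec dh lam N \<theta>" and ?w = "aligned_weight dh lam N \<theta> G"
  let ?\<phi> = "\<lambda>n. - Arg (G (n, 1) * complex_of_real (dentry N n) * ?a n)"
  let ?S1 = "\<Sum>k=1..Mt. (cmod (\<Sum>n=1..N. G (n, k) * (exp (\<i> * complex_of_real (?\<phi> n)) * ?a n)))\<^sup>2"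
  have first_column: "G (n, 1) * ?w n = complex_of_real (\<bar>dentry N n\<bar> * cmod (G (n, 1)))" for n
  proof -
    have "G (n, 1) * ?w n = (G (n, 1) * complex_of_real (dentry N n) * ?a n)
        * phase_conj (G (n, 1) * complex_of_real (dentry N n) * ?a n)"
      by (simp add: aligned_weight_def mult_ac)
    then show ?thesis
      by (simp add: mult_phase_conj norm_mult)
  qed
  have "(\<Sum>k=1..Mt. (cmod (\<Sum>n=1..N. G (n, k) * ?w n))\<^sup>2)
      = (cmod (\<Sum>n=1..N. G (n, 1) * ?w n))\<^sup>2 + (\<Sum>k=Suc 1..Mt. (cmod (\<Sum>n=1..N. G (n, k) * ?w n))\<^sup>2)"
    using assms by (rule sum.atLeast_Suc_atMost)
  also have "(cmod (\<Sum>n=1..N. G (n, 1) * ?w n))\<^sup>2 = (\<Sum>n=1..N. \<bar>dentry N n\<bar> * cmod (G (n, 1)))\<^sup>2"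
    by (simp only: first_column of_real_sum[symmetric] norm_of_real power2_abs)
  finally have columns: "(\<Sum>k=1..Mt. (cmod (\<Sum>n=1..N. G (n, k) * ?w n))\<^sup>2)
      = (\<Sum>n=1..N. \<bar>dentry N n\<bar> * cmod (G (n, 1)))\<^sup>2
        + (\<Sum>k=2..Mt. (cmod (\<Sum>n=1..N. G (n, k) * ?w n))\<^sup>2)"
    by (simp add: numeral_2_eq_2)
  have "0 \<le> ?S1 * (real Mr * ((real Mr)\<^sup>2 - 1) / 3)"
    by (intro mult_nonneg_nonneg sum_nonneg zero_le_power2 nat_mult_power2_minus_one_nonneg)
  moreover have "obj4 dh lam N Mt Mr \<theta> G ?\<phi> = ?S1 * (real Mr * ((real Mr)\<^sup>2 - 1) / 3)
      + real Mr * (\<Sum>k=1..Mt. (cmod (\<Sum>n=1..N. G (n, k) * ?w n))\<^sup>2)"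
    unfolding obj4_eq exp_Arg_phase_conj aligned_weight_def by (simp only: mult.assoc)
  ultimately show ?thesis
    using obj4_le_gamma4[of dh lam N Mt Mr \<theta> G ?\<phi>] unfolding columns by linarith
qed

lemma has_bochner_integral_aligned_column:
  assumes "2 \<le> k" "k \<le> Mt"
  shows "has_bochner_integral (PiM ({1..N} \<times> {1..Mt}) (\<lambda>_. cgauss))
    (\<lambda>G. (cmod (\<Sum>n=1..N. G (n, k) * aligned_weight dh lam N \<theta> G n))\<^sup>2) (real N * ((real N)\<^sup>2 - 1) / 3)"
proof -
  let ?I = "{1..N} \<times> {1..Mt}" and ?w = "aligned_weight dh lam N \<theta>"
  have sign: "?w (negate_at ?I (m, k) G) n = ?w G n" if "n \<in> {1..N}" "m \<in> {1..N}" for G n m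
    using assms that by (simp add: aligned_weight_def negate_at_def)
  have "finite ?I" "finite {1..N}" "inj_on (\<lambda>n. (n, k)) {1..N}" "(\<lambda>n. (n, k)) ` {1..N} \<subseteq> ?I"
    using assms by (auto intro: inj_onI)
  note integral_cmod_sum_power2_sign_symmetric[where \<iota> = "\<lambda>n. (n, k)" and r = "\<lambda>n. \<bar>dentry N n\<bar>",
      OF this borel_measurable_aligned_weight norm_aligned_weight sign]
  then show ?thesis
    unfolding power2_abs sum_dentry_power2 by (simp add: has_bochner_integral_iff)
qed

lemma integral_gamma4_ge:
  assumes "even N" "1 \<le> Mt"
  shows "real Mr * (pi * real N ^ 4 / 16 + (real Mt - 1) * (real N * ((real N)\<^sup>2 - 1) / 3))
    \<le> (\<integral>G. gamma4 dh lam N Mt Mr \<theta> G \<partial>Gt_measure N Mt)"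
proof -
  let ?I = "{1..N} \<times> {1..Mt}" and ?w = "aligned_weight dh lam N \<theta>"
  let ?M = "PiM ?I (\<lambda>_. cgauss)"
  let ?X = "\<lambda>G. (\<Sum>n=1..N. \<bar>dentry N n\<bar> * cmod (G (n, 1)))\<^sup>2"
    and ?Y = "\<lambda>k G. (cmod (\<Sum>n=1..N. G (n, k) * ?w G n))\<^sup>2"
    and ?c = "real N * ((real N)\<^sup>2 - 1) / 3"
  have "(\<lambda>n. (n, 1)) ` {1..N} \<subseteq> ?I"
    using assms(2) by auto
  note X = integral_weighted_norm_sum_power2_ge[where \<iota> = "\<lambda>n. (n, 1)" and c = "\<lambda>n. \<bar>dentry N n\<bar>", OF this]
  have Y: "has_bochner_integral ?M (?Y k) ?c" if "k \<in> {2..Mt}" for k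
    using that by (intro has_bochner_integral_aligned_column) auto
  let ?L = "\<lambda>G. real Mr * (?X G + (\<Sum>k=2..Mt. ?Y k G))"
  have sum_c: "(\<Sum>k=2..Mt. ?c) = (real Mt - 1) * ?c"
    using assms(2) by (simp add: of_nat_diff)
  have "has_bochner_integral ?M ?L (real Mr * ((\<integral>G. ?X G \<partial>?M) + (\<Sum>k=2..Mt. ?c)))"
    by (intro has_bochner_integral_mult_right has_bochner_integral_add has_bochner_integral_sum
        has_bochner_integral_integrable X(1) Y)
  then have L: "has_bochner_integral ?M ?L (real Mr * ((\<integral>G. ?X G \<partial>?M) + (real Mt - 1) * ?c))"
    unfolding sum_c .
  have "integrable ?M (gamma4 dh lam N Mt Mr \<theta>)"
    using integrable_gamma4 by (simp add: Gt_measure_def)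
  then have "(\<integral>G. ?L G \<partial>?M) \<le> (\<integral>G. gamma4 dh lam N Mt Mr \<theta> G \<partial>?M)"
    by (rule integral_mono[OF integrable.intros[OF L] _ gamma4_ge_aligned[OF assms(2)]])
  then have "real Mr * ((\<integral>G. ?X G \<partial>?M) + (real Mt - 1) * ?c) \<le> (\<integral>G. gamma4 dh lam N Mt Mr \<theta> G \<partial>?M)"
    unfolding has_bochner_integral_integral_eq[OF L] .
  moreover have "pi * real N ^ 4 / 16 \<le> (\<integral>G. ?X G \<partial>?M)"
    using X(2) unfolding sum_abs_dentry[OF assms(1)] by (simp add: power_mult_distrib power_divide)
  then have "real Mr * (pi * real N ^ 4 / 16 + (real Mt - 1) * ?c)
      \<le> real Mr * ((\<integral>G. ?X G \<partial>?M) + (real Mt - 1) * ?c)"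
    by (intro mult_left_mono) auto
  ultimately show ?thesis
    unfolding Gt_measure_def by linarith
qed

theorem proposition7:
  fixes dh lam \<theta> :: real and N Mt Mr :: nat
  assumes "dh > 0" and "lam > 0"
    and "N > 0" and "even N" and "Mt > 0" and "Mr > 0"
  shows "pi * real Mr * real N ^ 4 / 16 + real Mr * (real Mt - 1) * real N ^ 2 / 2
           \<le> (\<integral>G. gamma4 dh lam N Mt Mr \<theta> G \<partial>Gt_measure N Mt)
         \<and> (\<integral>G. gamma4 dh lam N Mt Mr \<theta> G \<partial>Gt_measure N Mt)
           \<le> real Mt * real Mr * (real Mr ^ 2 - 1) * real N ^ 2 / 3
              + real Mt * real Mr * real N ^ 2 * (real N ^ 2 - 1) / 3"
proof
  have "2 \<le> N"
    using \<open>N > 0\<close> \<open>even N\<close> by (auto elim: evenE)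
  then have "0 \<le> real N * ((2 * real N + 1) * (real N - 2))"
    by simp
  then have "real N ^ 2 / 2 \<le> real N * ((real N)\<^sup>2 - 1) / 3"
    by (simp add: algebra_simps power2_eq_square)
  then have "real Mr * (real Mt - 1) * (real N ^ 2 / 2) \<le> real Mr * (real Mt - 1) * (real N * ((real N)\<^sup>2 - 1) / 3)"
    using \<open>Mt > 0\<close> by (intro mult_left_mono) auto
  then have "pi * real Mr * real N ^ 4 / 16 + real Mr * (real Mt - 1) * real N ^ 2 / 2
      \<le> real Mr * (pi * real N ^ 4 / 16 + (real Mt - 1) * (real N * ((real N)\<^sup>2 - 1) / 3))"
    by (simp add: algebra_simps)
  also have "\<dots> \<le> (\<integral>G. gamma4 dh lam N Mt Mr \<theta> G \<partial>Gt_measure N Mt)"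
    using \<open>even N\<close> \<open>Mt > 0\<close> by (intro integral_gamma4_ge) auto
  finally show "pi * real Mr * real N ^ 4 / 16 + real Mr * (real Mt - 1) * real N ^ 2 / 2
      \<le> (\<integral>G. gamma4 dh lam N Mt Mr \<theta> G \<partial>Gt_measure N Mt)" .
  have "(\<integral>G. gamma4 dh lam N Mt Mr \<theta> G \<partial>Gt_measure N Mt) \<le> steering_gain N Mr * (real N * real Mt)"
    by (rule integral_gamma4_le)
  then show "(\<integral>G. gamma4 dh lam N Mt Mr \<theta> G \<partial>Gt_measure N Mt)
      \<le> real Mt * real Mr * (real Mr ^ 2 - 1) * real N ^ 2 / 3
         + real Mt * real Mr * real N ^ 2 * (real N ^ 2 - 1) / 3"
    by (simp add: steering_gain_def power2_eq_square field_simps)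
qed

end
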